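(* The transformation $\mathcal{A}_1$ is not an Upsilon transformation: there is no measure $\tau$ on $(0,\infty)$ such that $\mathcal{A}_1(\rho)(B)=\int_0^\infty\rho(u^{-1}B)\tau(\mathrm{d}u)$ for all $\rho\in\mathfrak{M}_L^1(\mathbb{R}^d)$ and all Borel sets $B\subset\mathbb{R}^d$.
   Context: A Lévy measure on $\mathbb{R}^d$ is a measure $\nu$ with $\nu(\{0\})=0$ and $\int(1\wedge|x|^2)\nu(\mathrm{d}x)<\infty$; $\mathfrak{M}_L^1(\mathbb{R}^d)$ is the class of those with $\int(1\wedge|x|)\nu(\mathrm{d}x)<\infty$. $a_1(r;s)=2\pi^{-1}(s-r^2)^{-1/2}$ for $0<r<s^{1/2}$, $0$ otherwise; $\mathcal{A}_1(\nu)(B)=\int_{\mathbb{R}^d\setminus\{0\}}\nu(\mathrm{d}x)\int_0^\infty a_1(r;|x|)1_B(rx/|x|)\mathrm{d}r$. Here $u^{-1}B=\{u^{-1}x:x\in B\}$. *)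

theory Defs
  imports "HOL-Analysis.Analysis"
begin

definition a1 :: "real \<Rightarrow> real \<Rightarrow> real" where
  "a1 r s = (if 0 < r \<and> r < sqrt s then 2 / pi * (1 / sqrt (s - r\<^sup>2)) else 0)"

definition levy_measure :: "'a::euclidean_space measure \<Rightarrow> bool" where
  "levy_measure \<nu> \<longleftrightarrow> sets \<nu> = sets borel \<and> emeasure \<nu> {0} = 0 \<and>
     (\<integral>\<^sup>+ x. ennreal (min 1 ((norm x)\<^sup>2)) \<partial>\<nu>) < \<infinity>"

definition levy_L1 :: "'a::euclidean_space measure \<Rightarrow> bool" where
  "levy_L1 \<nu> \<longleftrightarrow> levy_measure \<nu> \<and> (\<integral>\<^sup>+ x. ennreal (min 1 (norm x)) \<partial>\<nu>) < \<infinity>"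

definition A1 :: "'a::euclidean_space measure \<Rightarrow> 'a set \<Rightarrow> ennreal" where
  "A1 \<nu> B = (\<integral>\<^sup>+ x. indicator (- {0}) x *
      (\<integral>\<^sup>+ r. ennreal (a1 r (norm x)) * indicator B (r *\<^sub>R (x /\<^sub>R norm x)) \<partial>lborel) \<partial>\<nu>)"

end

theory Submission
  imports Defs "HOL-Probability.Giry_Monad"
begin

text \<open>
  Test both sides on point masses \<open>\<delta>\<^sub>c\<^sub>e\<close> (\<open>c > 0\<close>, \<open>|e| = 1\<close>) and on segments \<open>J e\<close> of the
  ray through \<open>e\<close>. An Upsilon transformation gives \<open>\<tau>{u. u c \<in> J}\<close>, which is invariant
  under dilations \<open>(c, J) \<mapsto> (t c, t J)\<close>. But \<open>\<A>\<^sub>1(\<delta>\<^sub>c\<^sub>e)(J e) = \<integral>\<^sub>J a\<^sub>1(r; c) dr\<close> and \<open>a\<^sub>1(\<cdot>; c)\<close> lives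
  on \<open>(0, \<surd>c)\<close>, which scales like \<open>\<surd>c\<close> rather than \<open>c\<close>: for \<open>J = [1/2, 3/4]\<close> the value is
  positive at \<open>c = 1\<close> and zero after dilation by \<open>4\<close>.
\<close>

lemma nn_integral_a1_eq_0:
  assumes "sqrt s \<le> a"
  shows "(\<integral>\<^sup>+ r. ennreal (a1 r s) * indicator {a..b} r \<partial>lborel) = 0"
proof -
  have "ennreal (a1 r s) * indicator {a..b} r = 0" for r
    using assms by (simp add: a1_def split: split_indicator)
  then show ?thesis
    by (simp del: mult_eq_0_iff)
qed

lemma a1_ge:
  assumes "0 < r" "r < sqrt s"
  shows "2 / (pi * sqrt s) \<le> a1 r s"
proof -
  have "r\<^sup>2 < s"
    using assms by (metis real_sqrt_less_iff real_sqrt_abs abs_of_pos)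
  then have "0 < s - r\<^sup>2"
    by simp
  then have "sqrt (s - r\<^sup>2) \<le> sqrt s" "0 < sqrt (s - r\<^sup>2)"
    by auto
  then have "1 / sqrt s \<le> 1 / sqrt (s - r\<^sup>2)"
    by (simp add: frac_le)
  then have "2 / pi * (1 / sqrt s) \<le> 2 / pi * (1 / sqrt (s - r\<^sup>2))"
    by (rule mult_left_mono) simp
  also have "\<dots> = a1 r s"
    using assms by (simp add: a1_def)
  finally show ?thesis
    by simp
qed

lemma nn_integral_a1_pos:
  assumes "0 < a" "a < b" "b < sqrt s"
  shows "0 < (\<integral>\<^sup>+ r. ennreal (a1 r s) * indicator {a..b} r \<partial>lborel)"
proof -
  have "0 < s"
    using assms by (metis less_trans real_sqrt_le_0_iff not_le)
  have "0 < ennreal (2 / (pi * sqrt s)) * ennreal (b - a)"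
    using assms \<open>0 < s\<close> by (simp add: ennreal_mult'[symmetric])
  also have "\<dots> = (\<integral>\<^sup>+ r. ennreal (2 / (pi * sqrt s)) * indicator {a..b} r \<partial>lborel)"
    using assms by (simp add: nn_integral_cmult_indicator)
  also have "\<dots> \<le> (\<integral>\<^sup>+ r. ennreal (a1 r s) * indicator {a..b} r \<partial>lborel)"
    using assms a1_ge[of _ s]
    by (intro nn_integral_mono) (auto simp: ennreal_leI split: split_indicator)
  finally show ?thesis .
qed

lemma nn_integral_return_borel:
  "(\<integral>\<^sup>+ y. g y \<partial>return borel (x::'a::t1_space)) = g x"
proof -
  have "AE y in return borel x. y = x"
    by (subst AE_return) auto
  then have "AE y in return borel x. g y = g x"
    by eventually_elim simp
  then have "(\<integral>\<^sup>+ y. g y \<partial>return borel x) = (\<integral>\<^sup>+ y. g x \<partial>return borel x)"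
    by (rule nn_integral_cong_AE)
  then show ?thesis
    by (simp add: nn_integral_return)
qed

lemma levy_L1_return: "(x::'a::euclidean_space) \<noteq> 0 \<Longrightarrow> levy_L1 (return borel x)"
  by (auto simp: levy_L1_def levy_measure_def nn_integral_return)

lemma scaleR_mem_image_scaleR_iff:
  "(e::'a::real_vector) \<noteq> 0 \<Longrightarrow> r *\<^sub>R e \<in> (\<lambda>t. t *\<^sub>R e) ` J \<longleftrightarrow> r \<in> J"
  by (auto simp: scaleR_cancel_right)

lemma A1_return_ray:
  fixes e :: "'a::euclidean_space"
  assumes "norm e = 1" "0 < c"
  shows "A1 (return borel (c *\<^sub>R e)) ((\<lambda>t. t *\<^sub>R e) ` J) =
           (\<integral>\<^sup>+ r. ennreal (a1 r c) * indicator J r \<partial>lborel)"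
proof -
  have "norm (c *\<^sub>R e) = c" "c *\<^sub>R e /\<^sub>R c = e" "c *\<^sub>R e \<noteq> 0" "e \<noteq> 0"
    using assms by auto
  then show ?thesis
    unfolding A1_def nn_integral_return_borel \<open>norm (c *\<^sub>R e) = c\<close> \<open>c *\<^sub>R e /\<^sub>R c = e\<close>
    by (simp add: scaleR_mem_image_scaleR_iff indicator_def)
qed

lemma emeasure_return_dilated_ray:
  fixes e :: "'a::euclidean_space"
  assumes "e \<noteq> 0" "0 < c" "compact J" "0 \<notin> J"
  shows "emeasure (return borel (c *\<^sub>R e)) ((\<lambda>x. x /\<^sub>R u) ` (\<lambda>t. t *\<^sub>R e) ` J) =
           indicator {u. u * c \<in> J} u"
proof -
  have image: "(\<lambda>x. x /\<^sub>R u) ` (\<lambda>t. t *\<^sub>R e) ` J = (\<lambda>t. t *\<^sub>R (e /\<^sub>R u)) ` J"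
    by (auto simp: image_image divide_inverse_commute)
  have "compact ((\<lambda>t. t *\<^sub>R (e /\<^sub>R u)) ` J)"
    using assms by (intro compact_continuous_image continuous_intros)
  then have "(\<lambda>t. t *\<^sub>R (e /\<^sub>R u)) ` J \<in> sets borel"
    by (simp add: borel_compact)
  moreover have "c *\<^sub>R e \<in> (\<lambda>t. t *\<^sub>R (e /\<^sub>R u)) ` J \<longleftrightarrow> u * c \<in> J"
  proof (cases "u = 0")
    case True
    then have "c *\<^sub>R e \<notin> (\<lambda>t. t *\<^sub>R (e /\<^sub>R u)) ` J"
      using assms by auto
    moreover have "u * c \<notin> J"
      using True assms by simp
    ultimately show ?thesis
      by blast
  next
    case False
    then have "c *\<^sub>R e = t *\<^sub>R (e /\<^sub>R u) \<longleftrightarrow> t = u * c" for t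
      using assms by (auto simp: field_simps)
    then show ?thesis
      by auto
  qed
  ultimately show ?thesis
    by (simp add: image split: split_indicator)
qed

lemma nn_integral_a1_segment_if_Upsilon:
  fixes \<tau> :: "real measure"
  assumes upsilon: "\<And>\<rho> B. levy_L1 (\<rho> :: 'a::euclidean_space measure) \<Longrightarrow> B \<in> sets borel \<Longrightarrow>
             A1 \<rho> B = (\<integral>\<^sup>+ u. emeasure \<rho> ((\<lambda>x. x /\<^sub>R u) ` B) \<partial>\<tau>)"
    and "0 < a" "0 < c"
  shows "(\<integral>\<^sup>+ r. ennreal (a1 r c) * indicator {a..b} r \<partial>lborel) =
           (\<integral>\<^sup>+ u. indicator {u. u * c \<in> {a..b}} u \<partial>\<tau>)"
proof -
  obtain e :: 'a where "norm e = 1"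
    using norm_Basis nonempty_Basis by blast
  then have "e \<noteq> 0"
    by auto
  have "compact ((\<lambda>t. t *\<^sub>R e) ` {a..b})"
    by (intro compact_continuous_image continuous_intros) auto
  moreover have "levy_L1 (return borel (c *\<^sub>R e))"
    using assms \<open>e \<noteq> 0\<close> by (intro levy_L1_return) auto
  ultimately have "A1 (return borel (c *\<^sub>R e)) ((\<lambda>t. t *\<^sub>R e) ` {a..b}) =
      (\<integral>\<^sup>+ u. emeasure (return borel (c *\<^sub>R e)) ((\<lambda>x. x /\<^sub>R u) ` (\<lambda>t. t *\<^sub>R e) ` {a..b}) \<partial>\<tau>)"
    by (intro upsilon) (auto simp: borel_compact)
  also have "\<dots> = (\<integral>\<^sup>+ u. indicator {u. u * c \<in> {a..b}} u \<partial>\<tau>)"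
    using assms \<open>e \<noteq> 0\<close> by (subst emeasure_return_dilated_ray) auto
  finally show ?thesis
    using assms \<open>norm e = 1\<close> by (simp only: A1_return_ray)
qed

theorem theorem3p10:
  shows "\<not> (\<exists>\<tau> :: real measure. sets \<tau> = sets borel \<and> emeasure \<tau> {..0} = 0 \<and>
           (\<forall>\<rho> :: 'a::euclidean_space measure. levy_L1 \<rho> \<longrightarrow>
              (\<forall>B \<in> sets (borel :: 'a measure).
                 A1 \<rho> B = (\<integral>\<^sup>+ u. emeasure \<rho> ((\<lambda>x. x /\<^sub>R u) ` B) \<partial>\<tau>))))"
proof
  assume "\<exists>\<tau> :: real measure. sets \<tau> = sets borel \<and> emeasure \<tau> {..0} = 0 \<and>
           (\<forall>\<rho> :: 'a measure. levy_L1 \<rho> \<longrightarrow> (\<forall>B \<in> sets (borel :: 'a measure).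
                 A1 \<rho> B = (\<integral>\<^sup>+ u. emeasure \<rho> ((\<lambda>x. x /\<^sub>R u) ` B) \<partial>\<tau>)))"
  then obtain \<tau> :: "real measure" where upsilon: "\<And>\<rho> B. levy_L1 (\<rho> :: 'a measure) \<Longrightarrow>
      B \<in> sets borel \<Longrightarrow> A1 \<rho> B = (\<integral>\<^sup>+ u. emeasure \<rho> ((\<lambda>x. x /\<^sub>R u) ` B) \<partial>\<tau>)"
    by blast
  note segment = nn_integral_a1_segment_if_Upsilon[OF upsilon]
  have "{u. u * 1 \<in> {1/2..3/4}} = {u. u * 4 \<in> {2..3::real}}"
    by auto
  then have "(\<integral>\<^sup>+ r. ennreal (a1 r 1) * indicator {1/2..3/4} r \<partial>lborel) =
        (\<integral>\<^sup>+ r. ennreal (a1 r 4) * indicator {2..3} r \<partial>lborel)"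
    by (simp only: segment zero_less_one zero_less_numeral divide_pos_pos)
  also have "\<dots> = 0"
    by (rule nn_integral_a1_eq_0) simp
  finally show False
    using nn_integral_a1_pos[of "1/2" "3/4" 1] by simp
qed

end
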